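(* Let $F:\mathcal M^S_n\to\mathbb R$ satisfy (H) and be rotationally invariant, and let $F^*$ be its recession function. Then either $\{M:F(M)\le0\}=\{M:\operatorname{tr}M\le0\}$, or there exists $\Lambda_F>1$ such that $\{M:F^*(M)\le0\}\subset\{M:\mathcal P^+_{1,\Lambda_F}(M)\le0\}$.
   Context: $\mathcal M^S_n$ real symmetric matrices. Pucci operators: $\mathcal P^+_{\lambda,\Lambda}(M)=\Lambda\sum_{\mu_i>0}\mu_i+\lambda\sum_{\mu_i<0}\mu_i$, $\mathcal P^-_{\lambda,\Lambda}(M)=\lambda\sum_{\mu_i>0}\mu_i+\Lambda\sum_{\mu_i<0}\mu_i$ ($\mu_i$ eigenvalues). $F$ satisfies (H) if convex, $F(0)=0$, and $\mathcal P^-_{\lambda,\Lambda}(N)\le F(M+N)-F(M)\le\mathcal P^+_{\lambda,\Lambda}(N)$ for all $M,N$ (some $0<\lambda\le\Lambda$). Rotationally invariant: $F(O^TMO)=F(M)$ for orthogonal $O$. Recession function $F^*(A)=\lim_{t\downarrow0}tF(t^{-1}A)$. *)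

theory Defs
  imports "HOL-Analysis.Analysis" "HOL-Computational_Algebra.Polynomial"
begin

definition sym_mat :: "real^'n^'n \<Rightarrow> bool" where
  "sym_mat M \<longleftrightarrow> transpose M = M"

definition mtrace :: "real^'n^'n \<Rightarrow> real" where
  "mtrace M = (\<Sum>i\<in>UNIV. M $ i $ i)"

definition charpoly :: "real^'n^'n \<Rightarrow> real poly" where
  "charpoly M = det (\<chi> i j. (if i = j then [:0, 1:] else 0) - [:M $ i $ j:])"

definition pos_eig_sum :: "real^'n^'n \<Rightarrow> real" where
  "pos_eig_sum M = (\<Sum>\<mu>\<in>{\<mu>. \<mu> > 0 \<and> poly (charpoly M) \<mu> = 0}. of_nat (order \<mu> (charpoly M)) * \<mu>)"

definition neg_eig_sum :: "real^'n^'n \<Rightarrow> real" where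
  "neg_eig_sum M = (\<Sum>\<mu>\<in>{\<mu>. \<mu> < 0 \<and> poly (charpoly M) \<mu> = 0}. of_nat (order \<mu> (charpoly M)) * \<mu>)"

definition pucci_plus :: "real \<Rightarrow> real \<Rightarrow> real^'n^'n \<Rightarrow> real" where
  "pucci_plus l L M = L * pos_eig_sum M + l * neg_eig_sum M"

definition pucci_minus :: "real \<Rightarrow> real \<Rightarrow> real^'n^'n \<Rightarrow> real" where
  "pucci_minus l L M = l * pos_eig_sum M + L * neg_eig_sum M"

definition hypH :: "real \<Rightarrow> real \<Rightarrow> (real^'n^'n \<Rightarrow> real) \<Rightarrow> bool" where
  "hypH l L F \<longleftrightarrow> 0 < l \<and> l \<le> L \<and>
     convex_on {M. sym_mat M} F \<and> F 0 = 0 \<and>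
     (\<forall>M N. sym_mat M \<longrightarrow> sym_mat N \<longrightarrow>
        pucci_minus l L N \<le> F (M + N) - F M \<and> F (M + N) - F M \<le> pucci_plus l L N)"

definition rot_invariant :: "(real^'n^'n \<Rightarrow> real) \<Rightarrow> bool" where
  "rot_invariant F \<longleftrightarrow>
     (\<forall>Q M. orthogonal_matrix Q \<longrightarrow> sym_mat M \<longrightarrow> F (transpose Q ** M ** Q) = F M)"

definition recession :: "(real^'n^'n \<Rightarrow> real) \<Rightarrow> real^'n^'n \<Rightarrow> real" where
  "recession F A = Lim (at_right 0) (\<lambda>t. t * F ((1 / t) *\<^sub>R A))"

end

theory Submission
  imports Defs
begin

text \<open>
  By the spectral theorem and rotational invariance, F is determined by g x = F (diag x), a convex
  function on \<real>^n that vanishes at 0 and is invariant under permutations of coordinates.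

  If F \<le> 0 on all traceless matrices, convexity forces F = 0 there, and comparing M with
  N + (tr M / n) I via (H) shows that F M and tr M have the same sign.

  Otherwise g y = \<delta> > 0 for some y with zero sum. If F*(M) \<le> 0, then g \<le> 0 on the ray
  through the eigenvalue vector d of M. Centring d to e = d - (tr M / n) 1 costs slope at most
  -L tr M, and averaging e over all permutations gives tr M \<le> 0. Combining permuted copies of e
  bounds the recession function of g in every direction e_a - e_b by n! (-L tr M) / (e_i - e_j);
  these directions span the zero-sum vectors, so \<delta> bounds the spread of e, hence the
  positive eigenvalues of M, by a multiple of -tr M. This is the Pucci inequality with
  \<Lambda>_F = 1 + \<delta> / (n |y|_1 n! L).
\<close>

section \<open>Symmetric matrices and their diagonalisation\<close>

definition diag_mat :: "real^'n \<Rightarrow> real^'n^'n" where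
  "diag_mat x = (\<chi> i j. if i = j then x $ i else 0)"

lemma sym_mat_iff: "sym_mat A \<longleftrightarrow> (\<forall>i j. A $ i $ j = A $ j $ i)"
  unfolding sym_mat_def transpose_def by (auto simp: vec_eq_iff)

lemma sym_mat_diag_mat [simp]: "sym_mat (diag_mat x)"
  by (simp add: sym_mat_iff diag_mat_def)

lemma sym_mat_mat [simp]: "sym_mat (mat c)"
  by (simp add: sym_mat_iff mat_def)

lemma sym_mat_zero [simp]: "sym_mat 0"
  by (simp add: sym_mat_iff)

lemma sym_mat_diff [simp]: "sym_mat A \<Longrightarrow> sym_mat B \<Longrightarrow> sym_mat (A - B)"
  by (simp add: sym_mat_iff)

lemma sym_mat_uminus [simp]: "sym_mat A \<Longrightarrow> sym_mat (- A)"
  by (simp add: sym_mat_iff)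

lemma sym_mat_scaleR [simp]: "sym_mat A \<Longrightarrow> sym_mat (c *\<^sub>R A)"
  by (simp add: sym_mat_iff)

lemma diag_mat_add: "diag_mat (x + y) = diag_mat x + diag_mat y"
  by (simp add: diag_mat_def vec_eq_iff)

lemma diag_mat_scaleR: "diag_mat (c *\<^sub>R x) = c *\<^sub>R diag_mat x"
  by (simp add: diag_mat_def vec_eq_iff)

lemma diag_mat_zero [simp]: "diag_mat 0 = 0"
  by (simp add: diag_mat_def vec_eq_iff)

lemma diag_mat_const: "diag_mat (\<chi> i. c) = mat c"
  by (simp add: mat_def diag_mat_def vec_eq_iff)

lemma matrix_diff_ldistrib:
  fixes A :: "'a::ring_1^'n^'m" and B C :: "'a^'p^'n"
  shows "A ** (B - C) = A ** B - A ** C"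
  by (simp add: matrix_matrix_mult_def vec_eq_iff algebra_simps sum_subtractf)

lemma matrix_diff_rdistrib:
  fixes A :: "'a::ring_1^'p^'n" and B C :: "'a^'n^'m"
  shows "(B - C) ** A = B ** A - C ** A"
  by (simp add: matrix_matrix_mult_def vec_eq_iff algebra_simps sum_subtractf)

lemma orthogonal_conj_mat:
  fixes Q :: "real^'n^'n"
  assumes "orthogonal_matrix Q"
  shows "transpose Q ** mat x ** Q = mat x"
proof -
  have "mat x = x *\<^sub>R (mat 1 :: real^'n^'n)"
    by (simp add: vec_eq_iff mat_def)
  then have "transpose Q ** mat x ** Q = x *\<^sub>R (transpose Q ** Q)"
    by (metis matrix_mul_rid matrix_scalar_ac scalar_matrix_assoc)
  then show ?thesis
    using assms \<open>mat x = x *\<^sub>R mat 1\<close> by (simp add: orthogonal_matrix)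
qed

lemma orthogonal_conj_scaleR:
  fixes Q A :: "real^'n^'n"
  shows "transpose Q ** (c *\<^sub>R A) ** Q = c *\<^sub>R (transpose Q ** A ** Q)"
  by (metis matrix_scalar_ac scalar_matrix_assoc)

lemma inner_matrix_vector_symmetric:
  fixes A :: "real^'n^'n"
  assumes "transpose A = A"
  shows "x \<bullet> (A *v y) = (A *v x) \<bullet> y"
  by (metis assms dot_lmul_matrix transpose_matrix_vector)

lemma quadratic_nonpos_imp_linear_coeff_zero:
  fixes a c :: real
  assumes "\<And>t. 2 * t * a + t\<^sup>2 * c \<le> 0"
  shows "a = 0"
proof -
  define q where "q = \<bar>c\<bar> + 1"
  have q: "q > 0" "2 * q + c > 0"
    unfolding q_def by auto
  have "2 * (a / q) * a + (a / q)\<^sup>2 * c = a\<^sup>2 * (2 * q + c) / q\<^sup>2"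
    using q by (simp add: field_simps power2_eq_square)
  then have "a\<^sup>2 * (2 * q + c) \<le> 0"
    using assms[of "a / q"] q by (simp add: divide_le_0_iff)
  then show ?thesis
    using q by (simp add: mult_le_0_iff)
qed

text \<open>Moving the maximizer v to v + t r with r = Av - (v \<bullet> Av) v raises the form
  x \<bullet> Ax - (v \<bullet> Av) |x|^2 by 2t|r|^2 + O(t^2), which forces r = 0.\<close>
lemma rayleigh_maximizer_eigenvector:
  fixes A :: "real^'n^'n"
  assumes sym: "transpose A = A" and S: "subspace S" and inv: "\<And>x. x \<in> S \<Longrightarrow> A *v x \<in> S"
    and v: "v \<in> S" "norm v = 1"
    and max: "\<And>w. w \<in> S \<Longrightarrow> norm w = 1 \<Longrightarrow> w \<bullet> (A *v w) \<le> v \<bullet> (A *v v)"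
  shows "A *v v = (v \<bullet> (A *v v)) *\<^sub>R v"
proof -
  define \<rho> where "\<rho> = v \<bullet> (A *v v)"
  define r where "r = A *v v - \<rho> *\<^sub>R v"
  have vv: "v \<bullet> v = 1"
    using v by (simp add: dot_square_norm)
  have r: "r \<in> S"
    unfolding r_def using S inv v by (simp add: subspace_diff subspace_mul)
  have rv: "v \<bullet> r = 0"
    unfolding r_def \<rho>_def by (simp add: inner_diff_right vv)
  have rAv: "r \<bullet> (A *v v) = r \<bullet> r"
    unfolding r_def by (simp add: inner_diff_left inner_diff_right \<rho>_def inner_commute vv)
  have "2 * t * (r \<bullet> r) + t\<^sup>2 * (r \<bullet> (A *v r) - \<rho> * (r \<bullet> r)) \<le> 0" for t
  proof -
    define w where "w = v + t *\<^sub>R r"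
    have ww: "w \<bullet> w = 1 + t\<^sup>2 * (r \<bullet> r)"
      unfolding w_def using rv
      by (simp add: inner_add_left inner_add_right vv inner_commute power2_eq_square)
    then have "norm w > 0"
      by (smt (verit) inner_ge_zero inner_zero_left mult_nonneg_nonneg zero_le_power2
          zero_less_norm_iff)
    have "w \<in> S"
      unfolding w_def using S v r by (simp add: subspace_add subspace_mul)
    then have "(w /\<^sub>R norm w) \<bullet> (A *v (w /\<^sub>R norm w)) \<le> \<rho>"
      unfolding \<rho>_def using \<open>norm w > 0\<close> S by (intro max) (auto simp: subspace_mul)
    moreover have "(w /\<^sub>R norm w) \<bullet> (A *v (w /\<^sub>R norm w)) = (w \<bullet> (A *v w)) / (norm w)\<^sup>2"
      by (simp add: matrix_vector_mult_scaleR power2_eq_square field_simps)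
    ultimately have "w \<bullet> (A *v w) \<le> \<rho> * (w \<bullet> w)"
      using \<open>norm w > 0\<close> by (simp add: pos_divide_le_eq dot_square_norm)
    moreover have "w \<bullet> (A *v w) = \<rho> + 2 * t * (r \<bullet> r) + t\<^sup>2 * (r \<bullet> (A *v r))"
      using inner_matrix_vector_symmetric[OF sym, of v r] unfolding w_def
      by (simp add: matrix_vector_right_distrib matrix_vector_mult_scaleR inner_add_left
          inner_add_right \<rho>_def rAv inner_commute power2_eq_square algebra_simps)
    ultimately show ?thesis
      unfolding ww by (simp add: algebra_simps)
  qed
  then have "r \<bullet> r = 0"
    by (rule quadratic_nonpos_imp_linear_coeff_zero)
  then show ?thesis
    unfolding r_def \<rho>_def by simp
qed

lemma symmetric_eigenvector_orthogonal_to: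
  fixes A :: "real^'n^'n"
  assumes sym: "transpose A = A" and "finite B"
    and eig: "\<And>b. b \<in> B \<Longrightarrow> \<exists>\<mu>. A *v b = \<mu> *\<^sub>R b"
    and "span B \<noteq> UNIV"
  obtains v where "norm v = 1" "\<forall>b\<in>B. orthogonal b v" "\<exists>\<mu>. A *v v = \<mu> *\<^sub>R v"
proof -
  define S where "S = {x. \<forall>b\<in>B. orthogonal b x}"
  have S: "subspace S"
    unfolding S_def by (rule subspace_orthogonal_to_vectors)
  obtain x0 where x0: "x0 \<noteq> 0" "\<forall>x\<in>span B. x0 \<bullet> x = 0"
    using span_not_UNIV_orthogonal[OF assms(4)] by blast
  then have "x0 /\<^sub>R norm x0 \<in> S \<inter> sphere 0 1"
    unfolding S_def by (auto simp: orthogonal_def inner_commute span_base)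
  moreover have "compact (S \<inter> sphere 0 1)"
    using S by (simp add: closed_subspace closed_Int_compact)
  moreover have "continuous_on (S \<inter> sphere 0 1) (\<lambda>x. x \<bullet> (A *v x))"
    by (intro continuous_intros linear_continuous_on matrix_vector_mul_bounded_linear)
  ultimately obtain v where v: "v \<in> S \<inter> sphere 0 1"
    and max: "\<And>w. w \<in> S \<inter> sphere 0 1 \<Longrightarrow> w \<bullet> (A *v w) \<le> v \<bullet> (A *v v)"
    using continuous_attains_sup[of "S \<inter> sphere 0 1"] by blast
  have "A *v x \<in> S" if "x \<in> S" for x
  proof -
    have "b \<bullet> (A *v x) = 0" if "b \<in> B" for b
    proof -
      obtain \<mu> where "A *v b = \<mu> *\<^sub>R b"
        using eig[OF \<open>b \<in> B\<close>] by blast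
      then show ?thesis
        using inner_matrix_vector_symmetric[OF sym, of b x] \<open>x \<in> S\<close> \<open>b \<in> B\<close>
        by (simp add: S_def orthogonal_def)
    qed
    then show ?thesis
      by (simp add: S_def orthogonal_def)
  qed
  then have "A *v v = (v \<bullet> (A *v v)) *\<^sub>R v"
    using v max by (intro rayleigh_maximizer_eigenvector[OF sym S]) auto
  then show ?thesis
    using v by (intro that[of v]) (auto simp: S_def)
qed

lemma symmetric_orthonormal_eigenvectors:
  fixes A :: "real^'n^'n"
  assumes sym: "transpose A = A" and "k \<le> CARD('n)"
  shows "\<exists>B. finite B \<and> card B = k \<and> pairwise orthogonal B \<and>
            (\<forall>b\<in>B. norm b = 1 \<and> (\<exists>\<mu>. A *v b = \<mu> *\<^sub>R b))"
  using assms(2)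
proof (induction k)
  case 0
  then show ?case by (intro exI[of _ "{}"]) auto
next
  case (Suc k)
  then obtain B where B: "finite B" "card B = k" "pairwise orthogonal B"
      "\<forall>b\<in>B. norm b = 1 \<and> (\<exists>\<mu>. A *v b = \<mu> *\<^sub>R b)"
    by auto
  have "dim (span B) < CARD('n)"
    using B Suc.prems dim_le_card[of "span B" B] by (simp add: span_superset)
  then have "span B \<noteq> UNIV"
    by (metis dim_UNIV DIM_cart DIM_real mult_1_right less_irrefl)
  then obtain v where v: "norm v = 1" "\<forall>b\<in>B. orthogonal b v" "\<exists>\<mu>. A *v v = \<mu> *\<^sub>R v"
    using symmetric_eigenvector_orthogonal_to[OF sym B(1)] B(4) by metis
  then have "v \<notin> B"
    by (metis norm_eq_1 orthogonal_def zero_neq_one)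
  moreover have "pairwise orthogonal (insert v B)"
    using B(3) v(2) by (auto simp: pairwise_insert orthogonal_commute)
  ultimately show ?case
    using B v by (intro exI[of _ "insert v B"]) auto
qed

theorem symmetric_matrix_diagonalization:
  fixes A :: "real^'n^'n"
  assumes "sym_mat A"
  obtains Q d where "orthogonal_matrix Q" "A = transpose Q ** diag_mat d ** Q"
proof -
  have sym: "transpose A = A"
    using assms by (simp add: sym_mat_def)
  obtain B where B: "card B = CARD('n)" "pairwise orthogonal B"
      "\<forall>b\<in>B. norm b = 1 \<and> (\<exists>\<mu>. A *v b = \<mu> *\<^sub>R b)"
    using symmetric_orthonormal_eigenvectors[OF sym order_refl] by auto
  then obtain f where f: "bij_betw f (UNIV::'n set) B"
    by (metis finite_same_card_bij finite card.infinite finite_class.finite_UNIV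
        zero_less_card_finite less_irrefl)
  define Q :: "real^'n^'n" where "Q = (\<chi> i. f i)"
  define d :: "real^'n" where "d = (\<chi> i. SOME \<mu>. A *v f i = \<mu> *\<^sub>R f i)"
  have fB: "f i \<in> B" for i
    using f by (auto simp: bij_betw_def)
  have eig: "A *v f i = (d $ i) *\<^sub>R f i" for i
    unfolding d_def using B(3) fB[of i] by (auto intro: someI_ex)
  have Q: "orthogonal_matrix Q"
    unfolding orthogonal_matrix_orthonormal_rows
  proof safe
    fix i
    show "norm (row i Q) = 1"
      using B(3) fB by (simp add: Q_def row_def vec_nth_inverse)
  next
    fix i j :: 'n
    assume "i \<noteq> j"
    then have "f i \<noteq> f j"
      using f by (auto simp: bij_betw_def inj_on_def)
    then show "orthogonal (row i Q) (row j Q)"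
      using B(2) fB by (auto simp: pairwise_def Q_def row_def vec_nth_inverse)
  qed
  have "A ** transpose Q = transpose Q ** diag_mat d"
  proof -
    have "(A ** transpose Q) $ j $ i = (A *v f i) $ j" for i j
      by (simp add: matrix_matrix_mult_def matrix_vector_mult_def transpose_def Q_def)
    moreover have "(transpose Q ** diag_mat d) $ j $ i = d $ i * f i $ j" for i j
      by (simp add: matrix_matrix_mult_def transpose_def Q_def diag_mat_def
          if_distrib[of "\<lambda>x. _ * x"] cong: if_cong)
    ultimately show ?thesis
      by (simp add: vec_eq_iff eig)
  qed
  then have "A = transpose Q ** diag_mat d ** Q"
    using Q by (metis matrix_mul_assoc matrix_mul_rid orthogonal_matrix_def)
  then show ?thesis
    using Q that by blast
qed

section \<open>Trace, eigenvalue sums and Pucci operators\<close>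

lemma mtrace_eq_trace: "mtrace = trace"
  by (simp add: fun_eq_iff mtrace_def trace_def)

lemma mtrace_uminus: "mtrace (- A) = - mtrace A"
  by (simp add: mtrace_def sum_negf)

lemma mtrace_diag_mat: "mtrace (diag_mat x) = (\<Sum>i\<in>UNIV. x $ i)"
  by (simp add: mtrace_def diag_mat_def)

lemma mtrace_orthogonal_conj:
  fixes Q A :: "real^'n^'n"
  assumes "orthogonal_matrix Q"
  shows "mtrace (transpose Q ** A ** Q) = mtrace A"
  using assms unfolding mtrace_eq_trace
  by (metis trace_mul_sym matrix_mul_assoc matrix_mul_lid orthogonal_matrix_def)

lemma det_orthogonal_conj:
  fixes Q A :: "real^'n^'n"
  assumes "orthogonal_matrix Q"
  shows "det (transpose Q ** A ** Q) = det A"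
proof -
  have "det (transpose Q ** A ** Q) = det A * det (transpose Q ** Q)"
    by (simp add: det_mul)
  then show ?thesis
    using assms by (simp add: orthogonal_matrix)
qed

lemma poly_charpoly: "poly (charpoly M) x = det (mat x - M)"
  unfolding charpoly_def det_def
  by (auto simp add: poly_sum poly_prod mat_def of_int_poly intro!: sum.cong prod.cong)

lemma charpoly_orthogonal_conj:
  fixes Q A :: "real^'n^'n"
  assumes "orthogonal_matrix Q"
  shows "charpoly (transpose Q ** A ** Q) = charpoly A"
proof -
  have "mat x - transpose Q ** A ** Q = transpose Q ** (mat x - A) ** Q" for x
    using assms by (simp add: matrix_diff_ldistrib matrix_diff_rdistrib orthogonal_conj_mat)
  then have "poly (charpoly (transpose Q ** A ** Q)) x = poly (charpoly A) x" for x
    by (simp add: poly_charpoly det_orthogonal_conj[OF assms])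
  then show ?thesis
    by (simp add: poly_eq_poly_eq_iff[symmetric] fun_eq_iff)
qed

lemma charpoly_diag_mat: "charpoly (diag_mat d) = (\<Prod>i\<in>UNIV. [:- d $ i, 1:])"
proof -
  have "poly (charpoly (diag_mat d)) x = poly (\<Prod>i\<in>UNIV. [:- d $ i, 1:]) x" for x
    unfolding poly_charpoly poly_prod
    by (subst det_diagonal) (auto simp: diag_mat_def mat_def)
  then show ?thesis
    by (simp add: poly_eq_poly_eq_iff[symmetric] fun_eq_iff)
qed

lemma order_prod_linear_factors:
  fixes d :: "'i \<Rightarrow> real"
  assumes "finite I"
  shows "order a (\<Prod>i\<in>I. [:- d i, 1:]) = card {i\<in>I. d i = a}"
  using assms
proof (induction I rule: finite_induct)
  case empty
  then show ?case by simp
next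
  case (insert j I)
  have "[:- d j, 1:] * (\<Prod>i\<in>I. [:- d i, 1:]) \<noteq> 0"
    using insert by (simp add: prod_zero_iff del: mult_pCons_left)
  then have "order a (\<Prod>i\<in>insert j I. [:- d i, 1:])
      = order a [:- d j, 1:] + order a (\<Prod>i\<in>I. [:- d i, 1:])"
    unfolding prod.insert[OF insert(1,2)] by (rule order_mult)
  also have "order a [:- d j, 1:] = (if d j = a then 1 else 0)"
    using order_power_n_n[of a 1] by (auto intro: order_0I)
  also have "(if d j = a then 1 else 0) + order a (\<Prod>i\<in>I. [:- d i, 1:])
      = card {i\<in>insert j I. d i = a}"
  proof (cases "d j = a")
    case True
    then have "{i\<in>insert j I. d i = a} = insert j {i\<in>I. d i = a}" by auto
    then show ?thesis using True insert by simp
  next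
    case False
    then have "{i\<in>insert j I. d i = a} = {i\<in>I. d i = a}" by auto
    then show ?thesis using False insert by simp
  qed
  finally show ?case .
qed

lemma sum_roots_prod_linear_factors:
  fixes d :: "'i::finite \<Rightarrow> real"
  assumes "\<not> P 0"
  shows "(\<Sum>\<mu>\<in>{\<mu>. P \<mu> \<and> poly (\<Prod>i\<in>UNIV. [:- d i, 1:]) \<mu> = 0}.
            of_nat (order \<mu> (\<Prod>i\<in>UNIV. [:- d i, 1:])) * \<mu>)
         = (\<Sum>i\<in>UNIV. if P (d i) then d i else 0)"
proof -
  let ?S = "{i. P (d i)}"
  have roots: "{\<mu>. P \<mu> \<and> poly (\<Prod>i\<in>UNIV. [:- d i, 1:]) \<mu> = 0} = d ` ?S"
    by (auto simp: poly_prod prod_zero_iff)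
  have "(\<Sum>i\<in>UNIV. if P (d i) then d i else 0) = sum d ?S"
    by (simp add: sum.inter_filter[symmetric])
  also have "\<dots> = (\<Sum>y\<in>d ` ?S. sum d {x\<in>?S. d x = y})"
    by (rule sum.image_gen) simp
  also have "\<dots> = (\<Sum>y\<in>d ` ?S. of_nat (card {i. d i = y}) * y)"
  proof (rule sum.cong)
    fix y assume "y \<in> d ` ?S"
    then have "{x\<in>?S. d x = y} = {i. d i = y}" by auto
    then show "sum d {x\<in>?S. d x = y} = of_nat (card {i. d i = y}) * y" by simp
  qed simp
  finally show ?thesis
    unfolding roots by (simp add: order_prod_linear_factors)
qed

lemma pos_eig_sum_diag_mat: "pos_eig_sum (diag_mat x) = (\<Sum>i\<in>UNIV. max (x $ i) 0)"
  unfolding pos_eig_sum_def charpoly_diag_mat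
  using sum_roots_prod_linear_factors[of "\<lambda>\<mu>. \<mu> > 0" "\<lambda>i. x $ i"]
  by (simp add: max_def if_distrib cong: if_cong) (auto intro!: sum.cong)

lemma neg_eig_sum_diag_mat: "neg_eig_sum (diag_mat x) = (\<Sum>i\<in>UNIV. min (x $ i) 0)"
  unfolding neg_eig_sum_def charpoly_diag_mat
  using sum_roots_prod_linear_factors[of "\<lambda>\<mu>. \<mu> < 0" "\<lambda>i. x $ i"]
  by (simp add: min_def if_distrib cong: if_cong) (auto intro!: sum.cong)

lemma pucci_plus_orthogonal_conj:
  "orthogonal_matrix Q \<Longrightarrow> pucci_plus l L (transpose Q ** A ** Q) = pucci_plus l L A"
  by (simp add: pucci_plus_def pos_eig_sum_def neg_eig_sum_def charpoly_orthogonal_conj)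

lemma pucci_plus_diag_mat:
  "pucci_plus l L (diag_mat x) = (\<Sum>i\<in>UNIV. L * max (x $ i) 0 + l * min (x $ i) 0)"
  by (simp add: pucci_plus_def pos_eig_sum_diag_mat neg_eig_sum_diag_mat sum.distrib
      sum_distrib_left)

lemma pucci_minus_diag_mat:
  "pucci_minus l L (diag_mat x) = (\<Sum>i\<in>UNIV. l * max (x $ i) 0 + L * min (x $ i) 0)"
  by (simp add: pucci_minus_def pos_eig_sum_diag_mat neg_eig_sum_diag_mat sum.distrib
      sum_distrib_left)

lemma pucci_plus_scaleR:
  assumes "sym_mat M" "c \<ge> 0"
  shows "pucci_plus l L (c *\<^sub>R M) = c * pucci_plus l L M"
proof -
  obtain Q d where Q: "orthogonal_matrix Q" and M: "M = transpose Q ** diag_mat d ** Q"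
    using symmetric_matrix_diagonalization[OF assms(1)] .
  have scale: "max (c * x) 0 = c * max x 0" "min (c * x) 0 = c * min x 0" for x :: real
    using assms(2) by (auto simp: max_def min_def mult_le_0_iff)
  show ?thesis
    unfolding M orthogonal_conj_scaleR[symmetric] diag_mat_scaleR[symmetric] pucci_plus_orthogonal_conj[OF Q]
    by (simp add: pucci_plus_diag_mat scale sum_distrib_left algebra_simps)
qed

lemma pucci_plus_mat:
  fixes c :: real
  shows "pucci_plus l L (mat c :: real^'n^'n) = real CARD('n) * (L * max c 0 + l * min c 0)"
  by (simp add: diag_mat_const[symmetric] pucci_plus_diag_mat)

lemma pucci_minus_mat:
  fixes c :: real
  shows "pucci_minus l L (mat c :: real^'n^'n) = real CARD('n) * (l * max c 0 + L * min c 0)"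
  by (simp add: diag_mat_const[symmetric] pucci_minus_diag_mat)

section \<open>Hypothesis (H) and the recession function\<close>

lemma hypH_convex_on: "hypH l L F \<Longrightarrow> convex_on {M. sym_mat M} F"
  unfolding hypH_def by blast

lemma hypH_zero: "hypH l L F \<Longrightarrow> F 0 = 0"
  unfolding hypH_def by blast

lemma hypH_ellipticity: "hypH l L F \<Longrightarrow> 0 < l \<and> l \<le> L"
  unfolding hypH_def by blast

lemma hypH_pucci_plus_bound:
  "hypH l L F \<Longrightarrow> sym_mat M \<Longrightarrow> sym_mat N \<Longrightarrow> F (M + N) \<le> F M + pucci_plus l L N"
  unfolding hypH_def by force

lemma hypH_pucci_minus_bound:
  "hypH l L F \<Longrightarrow> sym_mat M \<Longrightarrow> sym_mat N \<Longrightarrow> F M + pucci_minus l L N \<le> F (M + N)"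
  unfolding hypH_def by force

lemma perspective_antimono:
  assumes conv: "convex_on {M. sym_mat M} F" and F0: "F 0 = 0" and M: "sym_mat M"
    and st: "0 < s" "s \<le> t"
  shows "t * F ((1 / t) *\<^sub>R M) \<le> s * F ((1 / s) *\<^sub>R M)"
proof -
  have "(1 / t) *\<^sub>R M = (1 - s / t) *\<^sub>R 0 + (s / t) *\<^sub>R ((1 / s) *\<^sub>R M)"
    using st by simp
  then have "F ((1 / t) *\<^sub>R M) \<le> (1 - s / t) * F 0 + (s / t) * F ((1 / s) *\<^sub>R M)"
    using convex_onD[OF conv, of "s / t" 0 "(1 / s) *\<^sub>R M"] st M by simp
  then show ?thesis
    using st F0 by (simp add: field_simps)
qed

text \<open>The perspective t F (M / t) is antitone in t and bounded above, so F*(M) is its supremum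
  over t > 0.\<close>
lemma recession_nonpos_imp_ray_nonpos:
  assumes H: "hypH l L F" and M: "sym_mat M" and rec: "recession F M \<le> 0" and s: "s > 0"
  shows "F (s *\<^sub>R M) \<le> 0"
proof -
  define \<psi> where "\<psi> t = - (t * F ((1 / t) *\<^sub>R M))" for t
  have mono: "\<psi> a \<le> \<psi> b" if "0 < a" "a \<le> b" for a b
    using perspective_antimono[OF hypH_convex_on[OF H] hypH_zero[OF H] M that]
    by (simp add: \<psi>_def)
  have bound: "- pucci_plus l L M \<le> \<psi> a" if "0 < a" for a
  proof -
    have "F ((1 / a) *\<^sub>R M) \<le> pucci_plus l L ((1 / a) *\<^sub>R M)"
      using hypH_pucci_plus_bound[OF H, of 0 "(1 / a) *\<^sub>R M"] M by (simp add: hypH_zero[OF H])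
    then show ?thesis
      using that M by (simp add: \<psi>_def pucci_plus_scaleR field_simps)
  qed
  have "(\<psi> \<longlongrightarrow> Inf (\<psi> ` {0<..})) (at_right 0)"
    using Lim_right_bound[of UNIV 0 \<psi>, OF mono bound] by simp
  then have "recession F M = - Inf (\<psi> ` {0<..})"
    unfolding recession_def using tendsto_minus[where f = \<psi>]
    by (intro tendsto_Lim) (auto simp: \<psi>_def)
  moreover have "Inf (\<psi> ` {0<..}) \<le> \<psi> (1 / s)"
    using s bound by (intro cInf_lower bdd_belowI2) auto
  ultimately have "F (s *\<^sub>R M) / s \<le> 0"
    using rec s by (simp add: \<psi>_def)
  then show ?thesis
    using s by (simp add: divide_le_0_iff)
qed

section \<open>Convex functions invariant under permutations of coordinates\<close>

definition permute_vec :: "('n \<Rightarrow> 'n) \<Rightarrow> 'a^'n \<Rightarrow> 'a^'n" where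
  "permute_vec p x = (\<chi> i. x $ p i)"

lemma permute_vec_scaleR: "permute_vec p (c *\<^sub>R x) = c *\<^sub>R permute_vec p x"
  by (simp add: permute_vec_def vec_eq_iff)

lemma sum_permute_vec_nth_independent:
  fixes x :: "'a::comm_monoid_add^'n"
  shows "(\<Sum>p | p permutes UNIV. permute_vec p x) $ i
       = (\<Sum>p | p permutes UNIV. permute_vec p x) $ j"
proof -
  have "Transposition.transpose i j permutes UNIV"
    by (simp add: permutes_swap_id)
  then have "(\<Sum>p | p permutes UNIV. x $ p i)
      = (\<Sum>p | p permutes UNIV. x $ (p \<circ> Transposition.transpose i j) i)"
    by (rule sum_permutations_compose_right)
  then show ?thesis
    by (simp add: sum_component permute_vec_def)
qed

lemma sum_permute_vec_eq_0:
  fixes x :: "real^'n"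
  assumes "(\<Sum>i\<in>UNIV. x $ i) = 0"
  shows "(\<Sum>p | p permutes UNIV. permute_vec p x) = 0"
proof -
  let ?P = "{p. p permutes (UNIV :: 'n set)}"
  define v where "v = (\<Sum>p\<in>?P. permute_vec p x)"
  have "(\<Sum>j\<in>UNIV. v $ j) = (\<Sum>p\<in>?P. \<Sum>i\<in>UNIV. x $ p i)"
    by (simp add: v_def sum_component permute_vec_def sum.swap[of _ UNIV])
  also have "\<dots> = (\<Sum>p\<in>?P. \<Sum>i\<in>UNIV. x $ i)"
  proof (rule sum.cong)
    fix p
    assume "p \<in> ?P"
    then show "(\<Sum>i\<in>UNIV. x $ p i) = (\<Sum>i\<in>UNIV. x $ i)"
      using sum.permute[of p UNIV "\<lambda>i. x $ i"] by (simp add: comp_def)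
  qed simp
  finally have "(\<Sum>j\<in>UNIV. v $ j) = 0"
    using assms by simp
  moreover have "(\<Sum>j\<in>UNIV. v $ j) = CARD('n) * v $ i" for i
  proof -
    define c where "c = v $ i"
    have "v $ j = c" for j
      unfolding v_def c_def by (rule sum_permute_vec_nth_independent)
    then show ?thesis
      by (simp add: c_def[symmetric])
  qed
  ultimately have "CARD('n) * v $ i = 0" for i
    by simp
  then show ?thesis
    by (simp add: v_def[symmetric] vec_eq_iff)
qed

lemma permutation_mapping_pair:
  fixes a b i j :: 'n
  assumes "a \<noteq> b" "i \<noteq> j"
  obtains \<sigma> where "\<sigma> permutes UNIV" "\<sigma> a = i" "\<sigma> b = j"
proof -
  define \<sigma>1 where "\<sigma>1 = Transposition.transpose a i"
  define \<sigma> where "\<sigma> = Transposition.transpose j (\<sigma>1 b) \<circ> \<sigma>1"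
  have "\<sigma> permutes UNIV"
    unfolding \<sigma>_def \<sigma>1_def by (intro permutes_compose permutes_swap_id) auto
  moreover have "\<sigma>1 b \<noteq> i"
    using assms unfolding \<sigma>1_def by (auto simp: Transposition.transpose_def)
  then have "\<sigma> a = i" "\<sigma> b = j"
    using assms unfolding \<sigma>_def \<sigma>1_def by (auto simp: Transposition.transpose_def)
  ultimately show ?thesis
    using that by blast
qed

lemma mean_zero_axis_diff_decomposition:
  fixes y :: "real^'n"
  assumes "(\<Sum>k\<in>UNIV. y $ k) = 0"
  shows "y = (\<Sum>k\<in>UNIV. y $ k *\<^sub>R (axis k 1 - axis k0 1))"
proof -
  have "(\<Sum>k\<in>UNIV. y $ k *\<^sub>R (axis k 1 - axis k0 1)) $ m
      = (\<Sum>k\<in>UNIV. y $ k * (if m = k then 1 else 0)) - (\<Sum>k\<in>UNIV. y $ k) * (if m = k0 then 1 else 0)"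
    for m
    by (simp add: sum_component axis_def algebra_simps sum_subtractf sum_distrib_right)
  then show ?thesis
    using assms by (simp add: vec_eq_iff if_distrib[of "\<lambda>x. _ * x"] cong: if_cong)
qed

lemma exists_nonpos_of_sum_eq_0:
  fixes e :: "real^'n"
  assumes "(\<Sum>k\<in>UNIV. e $ k) = 0"
  obtains j where "e $ j \<le> 0"
proof (rule ccontr)
  assume "\<not> thesis"
  then have "\<forall>k. e $ k > 0"
    using that by (meson not_le)
  then have "(\<Sum>k\<in>UNIV. e $ k) > 0"
    by (simp add: sum_pos)
  then show False
    using assms by simp
qed

lemma l1_norm_pos:
  fixes y :: "real^'n"
  assumes "y \<noteq> 0"
  shows "(\<Sum>k\<in>UNIV. \<bar>y $ k\<bar>) > 0"
  using assms by (simp add: less_le sum_nonneg sum_nonneg_eq_0_iff vec_eq_iff)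

text \<open>The model is x \<mapsto> F (diag x) for F satisfying (H) and rotationally invariant.\<close>
locale perm_invariant_convex =
  fixes g :: "real^'n \<Rightarrow> real"
  assumes convex: "convex_on UNIV g"
    and zero: "g 0 = 0"
    and permute: "p permutes UNIV \<Longrightarrow> g (permute_vec p x) = g x"
begin

text \<open>ray_bound x c says that the recession function of g is at most c at x.\<close>
definition ray_bound :: "real^'n \<Rightarrow> real \<Rightarrow> bool" where
  "ray_bound x c \<longleftrightarrow> (\<forall>s>0. g (s *\<^sub>R x) \<le> s * c)"

lemma ray_bound_le: "ray_bound x c \<Longrightarrow> g x \<le> c"
  unfolding ray_bound_def by (metis mult_1 scaleR_one zero_less_one)

lemma ray_bound_zero: "c \<ge> 0 \<Longrightarrow> ray_bound 0 c"
  by (simp add: ray_bound_def zero)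

lemma ray_bound_add:
  assumes "ray_bound x c" "ray_bound y c'"
  shows "ray_bound (x + y) (c + c')"
  unfolding ray_bound_def
proof (intro allI impI)
  fix s :: real
  assume s: "s > 0"
  have "g (s *\<^sub>R (x + y)) = g ((1 - 1/2) *\<^sub>R ((2 * s) *\<^sub>R x) + (1/2) *\<^sub>R ((2 * s) *\<^sub>R y))"
    by (simp add: scaleR_add_right)
  also have "\<dots> \<le> (1 - 1/2) * g ((2 * s) *\<^sub>R x) + (1/2) * g ((2 * s) *\<^sub>R y)"
    by (rule convex_onD[OF convex]) auto
  also have "\<dots> \<le> (1 - 1/2) * ((2 * s) * c) + (1/2) * ((2 * s) * c')"
    using assms s unfolding ray_bound_def by (intro add_mono mult_left_mono) auto
  finally show "g (s *\<^sub>R (x + y)) \<le> s * (c + c')"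
    by (simp add: algebra_simps)
qed

lemma ray_bound_sum:
  assumes "finite I" "\<And>i. i \<in> I \<Longrightarrow> ray_bound (x i) (c i)"
  shows "ray_bound (\<Sum>i\<in>I. x i) (\<Sum>i\<in>I. c i)"
  using assms by (induction I rule: finite_induct) (auto intro: ray_bound_zero ray_bound_add)

lemma ray_bound_scaleR:
  assumes "ray_bound x c" "a \<ge> 0"
  shows "ray_bound (a *\<^sub>R x) (a * c)"
proof (cases "a = 0")
  case True
  then show ?thesis
    by (simp add: ray_bound_zero)
next
  case False
  then have "a > 0"
    using assms(2) by simp
  show ?thesis
    unfolding ray_bound_def
  proof (intro allI impI)
    fix s :: real
    assume "s > 0"
    then have "g ((s * a) *\<^sub>R x) \<le> (s * a) * c"
      using assms(1) \<open>a > 0\<close> unfolding ray_bound_def by simp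
    then show "g (s *\<^sub>R (a *\<^sub>R x)) \<le> s * (a * c)"
      by (simp add: mult.assoc)
  qed
qed

lemma ray_bound_permute:
  assumes "p permutes UNIV" "ray_bound x c"
  shows "ray_bound (permute_vec p x) c"
  using assms unfolding ray_bound_def by (simp add: permute_vec_scaleR[symmetric] permute)

lemma ray_bound_permutations_sum:
  assumes "ray_bound x c"
  shows "ray_bound (\<Sum>p | p permutes UNIV. permute_vec p x) (fact CARD('n) * c)"
  using ray_bound_sum[of "{p. p permutes UNIV}" "\<lambda>p. permute_vec p x" "\<lambda>_. c"]
    ray_bound_permute[OF _ assms]
  by (simp add: finite_permutations card_permutations)

lemma ray_bound_mean_zero_nonneg:
  assumes "(\<Sum>i\<in>UNIV. e $ i) = 0" "ray_bound e c"
  shows "c \<ge> 0"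
proof -
  have "g 0 \<le> fact CARD('n) * c"
    using ray_bound_le[OF ray_bound_permutations_sum[OF assms(2)]]
    by (simp add: sum_permute_vec_eq_0[OF assms(1)])
  moreover have "(fact CARD('n) :: real) > 0"
    by simp
  ultimately show ?thesis
    by (simp add: zero zero_le_mult_iff)
qed

text \<open>Averaging e over all permutations gives 0, so the permuted copies of e other than its
  transposition by (i j) add up to minus that transposed copy; together with e itself they
  sum to a positive multiple of the direction from j to i.\<close>
lemma ray_bound_axis_diff:
  assumes e0: "(\<Sum>k\<in>UNIV. e $ k) = 0" and e: "ray_bound e c" and ij: "e $ i > e $ j"
  shows "ray_bound (axis a 1 - axis b 1) (fact CARD('n) * c / (e $ i - e $ j))"
proof -
  let ?P = "{p. p permutes (UNIV :: 'n set)}"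
  let ?K = "fact CARD('n) :: real"
  define \<tau> where "\<tau> = Transposition.transpose i j"
  have \<tau>: "\<tau> \<in> ?P"
    by (simp add: \<tau>_def permutes_swap_id)
  have "ray_bound (\<Sum>p\<in>?P - {\<tau>}. permute_vec p e) (\<Sum>p\<in>?P - {\<tau>}. c)"
    using e by (intro ray_bound_sum) (auto simp: finite_permutations ray_bound_permute)
  moreover have "(\<Sum>p\<in>?P - {\<tau>}. permute_vec p e) = - permute_vec \<tau> e"
    using sum.remove[OF finite_permutations \<tau>, of "\<lambda>p. permute_vec p e"]
      sum_permute_vec_eq_0[OF e0]
    by (simp add: eq_neg_iff_add_eq_0 add.commute)
  moreover have "(\<Sum>p\<in>?P - {\<tau>}. c) = (?K - 1) * c"
    using \<tau> by (simp add: finite_permutations card_permutations card_Diff_singleton of_nat_diff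
        algebra_simps)
  ultimately have "ray_bound (e - permute_vec \<tau> e) (?K * c)"
    using ray_bound_add[OF e] by (fastforce simp: algebra_simps)
  moreover have "e - permute_vec \<tau> e = (e $ i - e $ j) *\<^sub>R (axis i 1 - axis j 1)"
    by (auto simp: vec_eq_iff permute_vec_def axis_def \<tau>_def Transposition.transpose_def)
  ultimately have "ray_bound ((1 / (e $ i - e $ j)) *\<^sub>R ((e $ i - e $ j) *\<^sub>R (axis i 1 - axis j 1)))
      ((1 / (e $ i - e $ j)) * (?K * c))"
    using ij by (intro ray_bound_scaleR) auto
  then have ray_ij: "ray_bound (axis i 1 - axis j 1) (?K * c / (e $ i - e $ j))"
    using ij by simp
  show ?thesis
  proof (cases "a = b")
    case True
    then show ?thesis
      using ray_bound_mean_zero_nonneg[OF e0 e] ij by (simp add: ray_bound_zero)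
  next
    case False
    moreover have "i \<noteq> j"
      using ij by auto
    ultimately obtain \<sigma> where \<sigma>: "\<sigma> permutes UNIV" "\<sigma> a = i" "\<sigma> b = j"
      by (rule permutation_mapping_pair)
    then have "permute_vec \<sigma> (axis i 1 - axis j 1) = (axis a 1 - axis b 1 :: real^'n)"
      using permutes_inj[OF \<sigma>(1)] by (auto simp: vec_eq_iff permute_vec_def axis_def inj_eq)
    then show ?thesis
      using ray_bound_permute[OF \<sigma>(1) ray_ij] by (simp only:)
  qed
qed

lemma le_of_ray_bound_axis_diff:
  assumes diff: "\<And>a b. ray_bound (axis a 1 - axis b 1) C" and y0: "(\<Sum>k\<in>UNIV. y $ k) = 0"
  shows "g y \<le> (\<Sum>k\<in>UNIV. \<bar>y $ k\<bar>) * C"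
proof -
  fix k0 :: 'n
  have "ray_bound (y $ k *\<^sub>R (axis k 1 - axis k0 1)) (\<bar>y $ k\<bar> * C)" for k
  proof (cases "y $ k \<ge> 0")
    case True
    then show ?thesis
      using ray_bound_scaleR[OF diff] by simp
  next
    case False
    then have "y $ k *\<^sub>R (axis k 1 - axis k0 1) = \<bar>y $ k\<bar> *\<^sub>R (axis k0 1 - axis k 1 :: real^'n)"
      by (simp add: algebra_simps)
    then show ?thesis
      using ray_bound_scaleR[OF diff, of "\<bar>y $ k\<bar>" k0 k] by (simp only: abs_ge_zero)
  qed
  then have "ray_bound (\<Sum>k\<in>UNIV. y $ k *\<^sub>R (axis k 1 - axis k0 1)) ((\<Sum>k\<in>UNIV. \<bar>y $ k\<bar>) * C)"
    unfolding sum_distrib_right by (intro ray_bound_sum) auto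
  then have "ray_bound y ((\<Sum>k\<in>UNIV. \<bar>y $ k\<bar>) * C)"
    by (simp only: mean_zero_axis_diff_decomposition[OF y0, of k0, symmetric])
  then show ?thesis
    by (rule ray_bound_le)
qed

lemma ray_bound_spread:
  assumes "(\<Sum>k\<in>UNIV. e $ k) = 0" "ray_bound e c" "(\<Sum>k\<in>UNIV. y $ k) = 0" "e $ j < e $ i"
  shows "(e $ i - e $ j) * g y \<le> (\<Sum>k\<in>UNIV. \<bar>y $ k\<bar>) * (fact CARD('n) * c)"
proof -
  have "g y \<le> (\<Sum>k\<in>UNIV. \<bar>y $ k\<bar>) * (fact CARD('n) * c / (e $ i - e $ j))"
    using assms by (intro le_of_ray_bound_axis_diff ray_bound_axis_diff)
  then show ?thesis
    using assms(4) by (simp add: field_simps)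
qed

lemma positive_part_sum_bound:
  assumes e0: "(\<Sum>k\<in>UNIV. e $ k) = 0" and e: "ray_bound e c"
    and y0: "(\<Sum>k\<in>UNIV. y $ k) = 0" and gy: "g y \<ge> 0" and de: "\<And>k. d $ k \<le> e $ k"
  shows "(\<Sum>k\<in>UNIV. max (d $ k) 0) * g y
         \<le> CARD('n) * ((\<Sum>k\<in>UNIV. \<bar>y $ k\<bar>) * (fact CARD('n) * c))"
proof -
  let ?B = "(\<Sum>k\<in>UNIV. \<bar>y $ k\<bar>) * (fact CARD('n) * c)"
  obtain j where j: "e $ j \<le> 0"
    using exists_nonpos_of_sum_eq_0[OF e0] .
  have "?B \<ge> 0"
    using ray_bound_mean_zero_nonneg[OF e0 e] by (simp add: sum_nonneg)
  have "max (d $ k) 0 * g y \<le> ?B" for k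
  proof (cases "d $ k \<le> 0")
    case True
    then show ?thesis
      using \<open>?B \<ge> 0\<close> by simp
  next
    case False
    then have "d $ k \<le> e $ k - e $ j" "e $ j < e $ k"
      using de[of k] j by linarith+
    then have "d $ k * g y \<le> (e $ k - e $ j) * g y"
      using gy by (intro mult_right_mono)
    also have "\<dots> \<le> ?B"
      by (rule ray_bound_spread[OF e0 e y0 \<open>e $ j < e $ k\<close>])
    finally show ?thesis
      using False by simp
  qed
  then have "(\<Sum>k\<in>UNIV. max (d $ k) 0 * g y) \<le> (\<Sum>k\<in>(UNIV::'n set). ?B)"
    by (intro sum_mono)
  then show ?thesis
    by (simp add: sum_distrib_right)
qed

end

section \<open>Restriction to diagonal matrices\<close>

definition perm_matrix :: "('n \<Rightarrow> 'n) \<Rightarrow> real^'n^'n" where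
  "perm_matrix p = (\<chi> k i. if k = p i then 1 else 0)"

lemma orthogonal_perm_matrix:
  assumes "p permutes UNIV"
  shows "orthogonal_matrix (perm_matrix p)"
proof -
  have "p i = p j \<longleftrightarrow> i = j" for i j
    using permutes_inj[OF assms] by (auto simp: inj_eq)
  then have "transpose (perm_matrix p) ** perm_matrix p = mat 1"
    by (simp add: vec_eq_iff matrix_matrix_mult_def transpose_def perm_matrix_def mat_def
        if_distrib[of "\<lambda>x. x * _"] sum.delta cong: if_cong)
  then show ?thesis
    by (simp add: orthogonal_matrix)
qed

lemma perm_matrix_conj_diag_mat:
  assumes "p permutes UNIV"
  shows "transpose (perm_matrix p) ** diag_mat x ** perm_matrix p = diag_mat (permute_vec p x)"
proof -
  have inj: "p i = p j \<longleftrightarrow> i = j" for i j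
    using permutes_inj[OF assms] by (auto simp: inj_eq)
  have "(transpose (perm_matrix p) ** diag_mat x ** perm_matrix p) $ i $ j
      = (\<Sum>k\<in>UNIV. (if k = p i then x $ k else 0) * (if k = p j then 1 else 0))" for i j
    by (simp add: matrix_matrix_mult_def transpose_def perm_matrix_def diag_mat_def
        if_distrib[of "\<lambda>x. x * _"] sum.delta cong: if_cong)
  then show ?thesis
    by (simp add: vec_eq_iff if_distrib[of "\<lambda>x. x * _"] sum.delta inj diag_mat_def
        permute_vec_def cong: if_cong)
qed

lemma rot_invariant_orthogonal_conj:
  fixes F :: "real^'n^'n \<Rightarrow> real"
  shows "rot_invariant F \<Longrightarrow> orthogonal_matrix Q \<Longrightarrow> sym_mat A \<Longrightarrow> F (transpose Q ** A ** Q) = F A"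
  unfolding rot_invariant_def by blast

lemma perm_invariant_convex_diag:
  fixes F :: "real^'n^'n \<Rightarrow> real"
  assumes H: "hypH l L F" and R: "rot_invariant F"
  shows "perm_invariant_convex (\<lambda>x. F (diag_mat x))"
proof
  show "convex_on UNIV (\<lambda>x. F (diag_mat x))"
  proof (rule convex_onI[OF _ convex_UNIV])
    fix u :: real and x y :: "real^'n"
    assume "0 < u" "u < 1"
    then show "F (diag_mat ((1 - u) *\<^sub>R x + u *\<^sub>R y))
        \<le> (1 - u) * F (diag_mat x) + u * F (diag_mat y)"
      using convex_onD[OF hypH_convex_on[OF H], of u "diag_mat x" "diag_mat y"]
      by (simp add: diag_mat_add diag_mat_scaleR)
  qed
  show "F (diag_mat 0) = 0"
    using hypH_zero[OF H] by simp
  show "F (diag_mat (permute_vec p x)) = F (diag_mat x)" if p: "p permutes UNIV" for p x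
    using rot_invariant_orthogonal_conj[OF R orthogonal_perm_matrix[OF p], of "diag_mat x"]
    by (simp add: perm_matrix_conj_diag_mat[OF p])
qed

lemma ray_bound_diag_shift:
  fixes F :: "real^'n^'n \<Rightarrow> real"
  assumes H: "hypH l L F" and R: "rot_invariant F"
    and d: "perm_invariant_convex.ray_bound (\<lambda>x. F (diag_mat x)) d c"
  shows "perm_invariant_convex.ray_bound (\<lambda>x. F (diag_mat x)) (d + (\<chi> i. a))
           (c + pucci_plus l L (mat a :: real^'n^'n))"
proof -
  interpret perm_invariant_convex "\<lambda>x. F (diag_mat x)"
    by (rule perm_invariant_convex_diag[OF H R])
  show ?thesis
    unfolding ray_bound_def
  proof (intro allI impI)
    fix s :: real
    assume s: "s > 0"
    have "F (diag_mat (s *\<^sub>R (d + (\<chi> i. a)))) = F (diag_mat (s *\<^sub>R d) + s *\<^sub>R mat a)"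
      by (simp add: diag_mat_add diag_mat_scaleR diag_mat_const scaleR_add_right)
    also have "\<dots> \<le> F (diag_mat (s *\<^sub>R d)) + s * pucci_plus l L (mat a :: real^'n^'n)"
      using hypH_pucci_plus_bound[OF H, of "diag_mat (s *\<^sub>R d)" "s *\<^sub>R mat a"] s
      by (simp add: pucci_plus_scaleR)
    also have "\<dots> \<le> s * (c + pucci_plus l L (mat a :: real^'n^'n))"
      using d s unfolding ray_bound_def by (simp add: distrib_left)
    finally show "F (diag_mat (s *\<^sub>R (d + (\<chi> i. a)))) \<le> s * (c + pucci_plus l L (mat a :: real^'n^'n))" .
  qed
qed

lemma ray_bound_eigenvalues_of_recession_nonpos:
  fixes F :: "real^'n^'n \<Rightarrow> real"
  assumes H: "hypH l L F" and R: "rot_invariant F" and M: "sym_mat M"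
    and rec: "recession F M \<le> 0"
    and Q: "orthogonal_matrix Q" and Md: "M = transpose Q ** diag_mat d ** Q"
  shows "perm_invariant_convex.ray_bound (\<lambda>x. F (diag_mat x)) d 0"
proof -
  interpret perm_invariant_convex "\<lambda>x. F (diag_mat x)"
    by (rule perm_invariant_convex_diag[OF H R])
  have "F (diag_mat (s *\<^sub>R d)) = F (s *\<^sub>R M)" for s
    unfolding Md orthogonal_conj_scaleR[symmetric] diag_mat_scaleR
    by (simp add: rot_invariant_orthogonal_conj[OF R Q])
  then show ?thesis
    unfolding ray_bound_def using recession_nonpos_imp_ray_nonpos[OF H M rec] by simp
qed

section \<open>The dichotomy\<close>

lemma traceless_nonpos_imp_eq_0:
  fixes F :: "real^'n^'n \<Rightarrow> real"
  assumes H: "hypH l L F" and nonpos: "\<And>N. sym_mat N \<Longrightarrow> mtrace N = 0 \<Longrightarrow> F N \<le> 0"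
    and N: "sym_mat N" "mtrace N = 0"
  shows "F N = 0"
proof -
  have "F ((1 - 1/2) *\<^sub>R N + (1/2) *\<^sub>R (- N)) \<le> (1 - 1/2) * F N + (1/2) * F (- N)"
    using N by (intro convex_onD[OF hypH_convex_on[OF H]]) auto
  then have "0 \<le> F N + F (- N)"
    by (simp add: hypH_zero[OF H])
  moreover have "F N \<le> 0" "F (- N) \<le> 0"
    using nonpos N by (auto simp: mtrace_uminus)
  ultimately show ?thesis
    by simp
qed

text \<open>Writing M = N + (tr M / n) I with F N = 0, (H) squeezes F M between two multiples of
  tr M of the same sign.\<close>
lemma nonpos_iff_trace_nonpos:
  fixes F :: "real^'n^'n \<Rightarrow> real"
  assumes H: "hypH l L F" and zero: "\<And>N. sym_mat N \<Longrightarrow> mtrace N = 0 \<Longrightarrow> F N = 0"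
    and M: "sym_mat M"
  shows "F M \<le> 0 \<longleftrightarrow> mtrace M \<le> 0"
proof -
  define n where "n = real CARD('n)"
  define c where "c = mtrace M / n"
  have n: "n > 0" and l: "0 < l" "l \<le> L"
    using hypH_ellipticity[OF H] by (auto simp: n_def)
  have tr: "mtrace M = n * c"
    using n by (simp add: c_def)
  have "mtrace (M - mat c) = 0"
    using tr by (simp add: mtrace_def sum_subtractf mat_def n_def)
  then have FN: "F (M - mat c) = 0"
    using M zero by simp
  have "F M \<le> n * (L * max c 0 + l * min c 0)"
    using hypH_pucci_plus_bound[OF H, of "M - mat c" "mat c"] M FN
    by (simp add: pucci_plus_mat n_def)
  have "n * (l * max c 0 + L * min c 0) \<le> F M"
    using hypH_pucci_minus_bound[OF H, of "M - mat c" "mat c"] M FN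
    by (simp add: pucci_minus_mat n_def)
  show ?thesis
  proof (cases "c \<le> 0")
    case True
    then have "n * (l * c) \<le> 0" "n * c \<le> 0"
      using n l by (simp_all add: mult_nonneg_nonpos)
    then show ?thesis
      using True \<open>F M \<le> n * (L * max c 0 + l * min c 0)\<close> tr by simp
  next
    case False
    then have "n * (l * c) > 0" "n * c > 0"
      using n l by simp_all
    then show ?thesis
      using False \<open>n * (l * max c 0 + L * min c 0) \<le> F M\<close> tr by simp
  qed
qed

lemma sublevel_eq_trace_sublevel:
  fixes F :: "real^'n^'n \<Rightarrow> real"
  assumes H: "hypH l L F" and nonpos: "\<And>N. sym_mat N \<Longrightarrow> mtrace N = 0 \<Longrightarrow> F N \<le> 0"
  shows "{M. sym_mat M \<and> F M \<le> 0} = {M. sym_mat M \<and> mtrace M \<le> 0}"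
  using nonpos_iff_trace_nonpos[OF H traceless_nonpos_imp_eq_0[OF H nonpos]] by blast

lemma ray_bound_centred_eigenvalues:
  fixes F :: "real^'n^'n \<Rightarrow> real"
  assumes H: "hypH l L F" and R: "rot_invariant F" and M: "sym_mat M"
    and rec: "recession F M \<le> 0"
    and Q: "orthogonal_matrix Q" and Md: "M = transpose Q ** diag_mat d ** Q"
  defines "t \<equiv> \<Sum>k\<in>UNIV. d $ k"
  shows "t \<le> 0 \<and> perm_invariant_convex.ray_bound (\<lambda>x. F (diag_mat x))
           (d + (\<chi> i. - t / CARD('n))) (- (L * t))"
proof -
  interpret perm_invariant_convex "\<lambda>x. F (diag_mat x)"
    by (rule perm_invariant_convex_diag[OF H R])
  define n where "n = real CARD('n)"
  define e where "e = d + (\<chi> i. - t / n)"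
  have n: "n > 0" and l: "0 < l" "l \<le> L"
    using hypH_ellipticity[OF H] by (auto simp: n_def)
  have e0: "(\<Sum>k\<in>UNIV. e $ k) = 0"
    using n by (simp add: e_def t_def n_def sum_subtractf)
  have e: "ray_bound e (pucci_plus l L (mat (- t / n) :: real^'n^'n))"
    unfolding e_def
    using ray_bound_diag_shift[OF H R ray_bound_eigenvalues_of_recession_nonpos[OF H R M rec Q Md]]
    by simp
  have Pt: "pucci_plus l L (mat (- t / n) :: real^'n^'n)
      = n * (L * max (- t / n) 0 + l * min (- t / n) 0)"
    by (simp add: pucci_plus_mat n_def)
  have "t \<le> 0"
  proof (rule ccontr)
    assume "\<not> t \<le> 0"
    then have "pucci_plus l L (mat (- t / n) :: real^'n^'n) < 0"
      unfolding Pt using n l by (simp add: max_def min_def mult_pos_neg)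
    then show False
      using ray_bound_mean_zero_nonneg[OF e0 e] by simp
  qed
  moreover from this have "- t / n \<ge> 0"
    using n by (simp add: divide_nonpos_pos)
  then have "pucci_plus l L (mat (- t / n) :: real^'n^'n) = - (L * t)"
    unfolding Pt using n by simp
  ultimately show ?thesis
    using e by (simp add: e_def n_def)
qed

lemma recession_nonpos_imp_pucci_plus_nonpos:
  fixes F :: "real^'n^'n \<Rightarrow> real" and y :: "real^'n"
  assumes H: "hypH l L F" and R: "rot_invariant F"
    and y0: "(\<Sum>k\<in>UNIV. y $ k) = 0" and pos: "F (diag_mat y) > 0"
    and M: "sym_mat M" and rec: "recession F M \<le> 0"
  shows "pucci_plus 1 (1 + F (diag_mat y) / (CARD('n) * (\<Sum>k\<in>UNIV. \<bar>y $ k\<bar>) * fact CARD('n) * L)) M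
         \<le> 0"
proof -
  interpret perm_invariant_convex "\<lambda>x. F (diag_mat x)"
    by (rule perm_invariant_convex_diag[OF H R])
  define B where "B = CARD('n) * (\<Sum>k\<in>UNIV. \<bar>y $ k\<bar>) * fact CARD('n) * L"
  obtain Q d where Q: "orthogonal_matrix Q" and Md: "M = transpose Q ** diag_mat d ** Q"
    using symmetric_matrix_diagonalization[OF M] .
  define t where "t = (\<Sum>k\<in>UNIV. d $ k)"
  define e where "e = d + (\<chi> i. - t / CARD('n))"
  have t: "t \<le> 0" and e: "ray_bound e (- (L * t))"
    using ray_bound_centred_eigenvalues[OF H R M rec Q Md] by (simp_all add: t_def e_def)
  have e0: "(\<Sum>k\<in>UNIV. e $ k) = 0"
    by (simp add: e_def t_def sum_subtractf)
  have "d $ k \<le> e $ k" for k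
    using t by (simp add: e_def divide_nonpos_pos)
  then have "(\<Sum>k\<in>UNIV. max (d $ k) 0) * F (diag_mat y) \<le> B * (- t)"
    using positive_part_sum_bound[OF e0 e y0 less_imp_le[OF pos]] by (simp add: B_def mult.assoc)
  moreover have "B > 0"
    using pos hypH_zero[OF H] hypH_ellipticity[OF H] l1_norm_pos[of y] unfolding B_def
    by (cases "y = 0") auto
  ultimately have "F (diag_mat y) / B * (\<Sum>k\<in>UNIV. max (d $ k) 0) \<le> - t"
    by (simp add: field_simps)
  moreover have "(\<Sum>k\<in>UNIV. max (d $ k) 0) + (\<Sum>k\<in>UNIV. min (d $ k) 0) = t"
    unfolding t_def sum.distrib[symmetric] by (intro sum.cong) auto
  ultimately show ?thesis
    unfolding Md pucci_plus_orthogonal_conj[OF Q] pucci_plus_diag_mat B_def[symmetric]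
    by (simp add: sum.distrib sum_distrib_left algebra_simps)
qed

lemma pucci_bound_of_traceless_positive:
  fixes F :: "real^'n^'n \<Rightarrow> real"
  assumes H: "hypH l L F" and R: "rot_invariant F"
    and N: "sym_mat N" "mtrace N = 0" "F N > 0"
  shows "\<exists>LF > 1. {M. sym_mat M \<and> recession F M \<le> 0} \<subseteq> {M. sym_mat M \<and> pucci_plus 1 LF M \<le> 0}"
proof -
  obtain Q y where Q: "orthogonal_matrix Q" and Ny: "N = transpose Q ** diag_mat y ** Q"
    using symmetric_matrix_diagonalization[OF N(1)] .
  have y0: "(\<Sum>k\<in>UNIV. y $ k) = 0" and pos: "F (diag_mat y) > 0"
    using N unfolding Ny mtrace_orthogonal_conj[OF Q] mtrace_diag_mat
      rot_invariant_orthogonal_conj[OF R Q sym_mat_diag_mat]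
    by auto
  define \<kappa> where "\<kappa> = F (diag_mat y) / (CARD('n) * (\<Sum>k\<in>UNIV. \<bar>y $ k\<bar>) * fact CARD('n) * L)"
  have "y \<noteq> 0"
    using pos hypH_zero[OF H] by auto
  then have "\<kappa> > 0"
    unfolding \<kappa>_def using pos l1_norm_pos hypH_ellipticity[OF H]
    by (intro divide_pos_pos mult_pos_pos) auto
  then show ?thesis
    using recession_nonpos_imp_pucci_plus_nonpos[OF H R y0 pos] unfolding \<kappa>_def[symmetric]
    by (intro exI[of _ "1 + \<kappa>"]) auto
qed

theorem proposition6p2:
  fixes F :: "real^'n^'n \<Rightarrow> real" and l L :: real
  assumes "hypH l L F" and "rot_invariant F"
  shows "{M. sym_mat M \<and> F M \<le> 0} = {M. sym_mat M \<and> mtrace M \<le> 0}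
         \<or> (\<exists>LF > 1. {M. sym_mat M \<and> recession F M \<le> 0}
                      \<subseteq> {M. sym_mat M \<and> pucci_plus 1 LF M \<le> 0})"
proof (cases "\<forall>N. sym_mat N \<and> mtrace N = 0 \<longrightarrow> F N \<le> 0")
  case True
  then show ?thesis
    using sublevel_eq_trace_sublevel[OF assms(1)] by blast
next
  case False
  then obtain N where "sym_mat N" "mtrace N = 0" "F N > 0"
    by auto
  then show ?thesis
    using pucci_bound_of_traceless_positive[OF assms] by blast
qed

end
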